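(* Let $h$ be a hospital whose utility is proportional to total wage, i.e. $f_h(Y)=\gamma_h\,w_h(Y)$ for all $Y\subseteq X_h$ for some constant $\gamma_h>0$. Define $\mathrm{Ch}_h:2^{X_h}\to2^{X_h}$ as follows: given $X'\subseteq X_h$ (with $\mathrm{Ch}_h(\emptyset)=\emptyset$), sort $X'$ in non-decreasing order of wage (ties broken by a fixed order) as $x^{(1)},\dots,x^{(|X'|)}$; start with $Y=\emptyset$ and for $i=1,\dots,|X'|-1$ add $x^{(i)}$ to $Y$ if $w_h(Y\cup\{x^{(i)}\})<B_h$; finally add $x^{(|X'|)}$ (a highest-wage contract) to $Y$ and return $Y$. Then $\mathrm{Ch}_h$ satisfies SUB, IRC, LAD and COM.
   Context: Hospital $h$ has a finite set $X_h$ of contracts $x$ with wages $x_W$, $0<x_W\le B_h$, where $B_h>0$ is its budget. $w_h(Y)=\sum_{x\in Y}x_W$ for $Y\subseteq X_h$. For $\mathrm{Ch}_h$ with $\mathrm{Ch}_h(Y)\subseteq Y$: SUB means for all $Y''\subseteq Y'\subseteq X_h$, $Y''\setminus\mathrm{Ch}_h(Y'')\subseteq Y'\setminus\mathrm{Ch}_h(Y')$; IRC means for $Y'\subseteq X_h$, $Y''\subseteq X_h\setminus Y'$, if $\mathrm{Ch}_h(Y'\cup Y'')\subseteq Y'$ then $\mathrm{Ch}_h(Y')=\mathrm{Ch}_h(Y'\cup Y'')$; LAD means for all $Y''\subseteq Y'\subseteq X_h$, $|\mathrm{Ch}_h(Y'')|\le|\mathrm{Ch}_h(Y')|$; COM means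 for all $Y''\subseteq Y'\subseteq X_h$ with $w_h(Y'')\le\max\{B_h,w_h(\mathrm{Ch}_h(Y'))\}$, $f_h(\mathrm{Ch}_h(Y'))\ge f_h(Y'')$. *)

theory Defs
  imports Complex_Main "HOL-Library.Product_Lexorder"
begin

definition wsum :: "('a \<Rightarrow> real) \<Rightarrow> 'a set \<Rightarrow> real" where
  "wsum wage Y = (\<Sum>x\<in>Y. wage x)"

fun greedy :: "('a \<Rightarrow> real) \<Rightarrow> real \<Rightarrow> 'a list \<Rightarrow> 'a set \<Rightarrow> 'a set" where
  "greedy wage B [] Y = Y"
| "greedy wage B (x # xs) Y =
     greedy wage B xs (if wsum wage (Y \<union> {x}) < B then Y \<union> {x} else Y)"

definition sorted_contracts :: "('a \<Rightarrow> real) \<Rightarrow> ('a \<Rightarrow> nat) \<Rightarrow> 'a set \<Rightarrow> 'a list" where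
  "sorted_contracts wage r X' = sorted_key_list_of_set (\<lambda>x. (wage x, r x)) X'"

definition Ch :: "('a \<Rightarrow> real) \<Rightarrow> real \<Rightarrow> ('a \<Rightarrow> nat) \<Rightarrow> 'a set \<Rightarrow> 'a set" where
  "Ch wage B r X' =
     (if X' = {} then {}
      else (let xs = sorted_contracts wage r X'
            in greedy wage B (butlast xs) {} \<union> {last xs}))"

definition SUB :: "'a set \<Rightarrow> ('a set \<Rightarrow> 'a set) \<Rightarrow> bool" where
  "SUB X C = (\<forall>Y' Y''. Y'' \<subseteq> Y' \<and> Y' \<subseteq> X \<longrightarrow> Y'' - C Y'' \<subseteq> Y' - C Y')"

definition IRC :: "'a set \<Rightarrow> ('a set \<Rightarrow> 'a set) \<Rightarrow> bool" where
  "IRC X C = (\<forall>Y' Y''. Y' \<subseteq> X \<and> Y'' \<subseteq> X - Y' \<longrightarrow>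
                 C (Y' \<union> Y'') \<subseteq> Y' \<longrightarrow> C Y' = C (Y' \<union> Y''))"

definition LAD :: "'a set \<Rightarrow> ('a set \<Rightarrow> 'a set) \<Rightarrow> bool" where
  "LAD X C = (\<forall>Y' Y''. Y'' \<subseteq> Y' \<and> Y' \<subseteq> X \<longrightarrow> card (C Y'') \<le> card (C Y'))"

definition COM :: "'a set \<Rightarrow> real \<Rightarrow> ('a \<Rightarrow> real) \<Rightarrow> ('a set \<Rightarrow> real) \<Rightarrow> ('a set \<Rightarrow> 'a set) \<Rightarrow> bool" where
  "COM X B wage f C = (\<forall>Y' Y''. Y'' \<subseteq> Y' \<and> Y' \<subseteq> X \<and>
        wsum wage Y'' \<le> max B (wsum wage (C Y')) \<longrightarrow> f (C Y') \<ge> f Y'')"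

end

theory Submission
  imports Defs
begin

text \<open>
  Rank the contracts by wage, ties broken by the rank r. Since wages are positive and
  non-decreasing along this ranking, the cumulative wage of a contract in Y (its own wage plus
  that of everything ranked below it in Y) strictly increases along the ranking, so once the
  greedy pass rejects a contract it rejects all later ones. Hence Ch Y consists of the top contract
  of Y together with every contract whose cumulative wage in Y is below the budget.

  SUB holds because cumulative wages only grow as Y grows. For LAD, adding a contract z to a set
  can push at most one affordable contract d over the budget, and then z itself is affordable.
  IRC follows from SUB and LAD. For COM, if some contract is rejected, the cumulative wage of the
  lowest rejected one, which is at least B, is bounded by the wage of the top contract plus that of
  all contracts chosen below it.
\<close>

context linorder
begin

lemma set_strict_sorted_key_list_of_set:
  assumes "inj_on f S" "A \<subseteq> S" "finite A"
  shows "set (sorted_key_list_of_set f A) = A"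
    and "sorted_wrt (\<lambda>x y. f x < f y) (sorted_key_list_of_set f A)"
proof -
  interpret folding_insort_key "(\<le>)" "(<)" S f
    by unfold_locales (rule assms(1))
  show "set (sorted_key_list_of_set f A) = A"
    using assms(2,3) by simp
  show "sorted_wrt (\<lambda>x y. f x < f y) (sorted_key_list_of_set f A)"
    using strict_sorted_key_list_of_set[OF assms(2)] by (simp add: sorted_wrt_map)
qed

end

lemma wsum_insert: "finite A \<Longrightarrow> a \<notin> A \<Longrightarrow> wsum w (insert a A) = w a + wsum w A"
  by (simp add: wsum_def)

lemma wsum_mono:
  assumes "finite C" "A \<subseteq> C" "\<And>x. x \<in> C \<Longrightarrow> 0 \<le> w x"
  shows "wsum w A \<le> wsum w C"
  unfolding wsum_def using assms by (intro sum_mono2) auto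

lemma IRC_if_SUB_LAD:
  assumes "finite X" and subset: "\<And>Y. Y \<subseteq> X \<Longrightarrow> C Y \<subseteq> Y"
    and "SUB X C" "LAD X C"
  shows "IRC X C"
  unfolding IRC_def
proof (intro allI impI)
  fix Y' Y'' assume "Y' \<subseteq> X \<and> Y'' \<subseteq> X - Y'" and chosen: "C (Y' \<union> Y'') \<subseteq> Y'"
  then have Y': "Y' \<subseteq> X" and U: "Y' \<union> Y'' \<subseteq> X" by auto
  have "Y' - C Y' \<subseteq> (Y' \<union> Y'') - C (Y' \<union> Y'')"
    using \<open>SUB X C\<close> U unfolding SUB_def by blast
  with chosen have sub: "C (Y' \<union> Y'') \<subseteq> C Y'" by blast
  have "card (C Y') \<le> card (C (Y' \<union> Y''))"
    using \<open>LAD X C\<close> U unfolding LAD_def by blast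
  moreover have "finite (C Y')"
    using subset[OF Y'] Y' \<open>finite X\<close> by (meson finite_subset)
  ultimately show "C Y' = C (Y' \<union> Y'')"
    using card_seteq sub by blast
qed

lemma COM_if_budget_exhausted:
  assumes "finite X" and nonneg: "\<forall>x\<in>X. 0 \<le> wage x" and "\<gamma> \<ge> 0"
    and f: "\<forall>Y. Y \<subseteq> X \<longrightarrow> f Y = \<gamma> * wsum wage Y"
    and subset: "\<And>Y. Y \<subseteq> X \<Longrightarrow> C Y \<subseteq> Y"
    and exhausted: "\<And>Y. Y \<subseteq> X \<Longrightarrow> C Y \<noteq> Y \<Longrightarrow> B \<le> wsum wage (C Y)"
  shows "COM X B wage f C"
  unfolding COM_def
proof (intro allI impI)
  fix Y' Y'' assume a: "Y'' \<subseteq> Y' \<and> Y' \<subseteq> X \<and> wsum wage Y'' \<le> max B (wsum wage (C Y'))"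
  then have Y': "Y' \<subseteq> X" and CY': "C Y' \<subseteq> X" using subset by blast+
  have "wsum wage Y'' \<le> wsum wage (C Y')"
  proof (cases "C Y' = Y'")
    case True
    then show ?thesis
      using a nonneg \<open>finite X\<close> by (metis finite_subset subset_iff wsum_mono)
  next
    case False
    then show ?thesis using exhausted[OF Y'] a by linarith
  qed
  then show "f Y'' \<le> f (C Y')"
    using f a CY' \<open>\<gamma> \<ge> 0\<close> by (auto intro: mult_left_mono)
qed

lemma choice_properties_cong:
  assumes "\<And>Y. Y \<subseteq> X \<Longrightarrow> C Y = C' Y"
  shows "SUB X C = SUB X C'" and "IRC X C = IRC X C'" and "LAD X C = LAD X C'"
    and "COM X B wage f C = COM X B wage f C'"
proof -
  have eq: "Y \<subseteq> X \<Longrightarrow> C Y = C' Y" for Y using assms .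
  show "SUB X C = SUB X C'" unfolding SUB_def
    by (intro iff_allI imp_cong refl) (metis eq subset_trans)
  show "IRC X C = IRC X C'" unfolding IRC_def
  proof (intro iff_allI imp_cong refl)
    fix Y' Y'' assume "Y' \<subseteq> X \<and> Y'' \<subseteq> X - Y'"
    then have "C Y' = C' Y'" "C (Y' \<union> Y'') = C' (Y' \<union> Y'')" by (auto intro!: eq)
    then show "(C (Y' \<union> Y'') \<subseteq> Y') = (C' (Y' \<union> Y'') \<subseteq> Y')"
      and "(C Y' = C (Y' \<union> Y'')) = (C' Y' = C' (Y' \<union> Y''))" by simp_all
  qed
  show "LAD X C = LAD X C'" unfolding LAD_def
    by (intro iff_allI imp_cong refl) (metis eq subset_trans)
  show "COM X B wage f C = COM X B wage f C'" unfolding COM_def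
    by (intro iff_allI) (metis eq)
qed

locale wage_ranking =
  fixes X :: "'a set" and wage :: "'a \<Rightarrow> real" and B :: real and key :: "'a \<Rightarrow> 'k::linorder"
  assumes finite_X: "finite X"
    and wage_pos: "x \<in> X \<Longrightarrow> 0 < wage x"
    and inj_key: "inj_on key X"
    and wage_mono: "key x < key y \<Longrightarrow> wage x \<le> wage y"
begin

definition wage_upto :: "'a set \<Rightarrow> 'a \<Rightarrow> real" where
  "wage_upto S x = wsum wage {y \<in> S. key y \<le> key x}"

definition budget_prefix :: "'a set \<Rightarrow> 'a set" where
  "budget_prefix S = {x \<in> S. wage_upto S x < B}"

definition greedy_choice :: "'a set \<Rightarrow> 'a set" where
  "greedy_choice Y = {x \<in> Y. wage_upto Y x < B \<or> (\<forall>y\<in>Y. key y \<le> key x)}"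

lemma finite_if_subset_X: "S \<subseteq> X \<Longrightarrow> finite S"
  by (rule finite_subset[OF _ finite_X])

lemma wsum_mono_X: "A \<subseteq> S \<Longrightarrow> S \<subseteq> X \<Longrightarrow> wsum wage A \<le> wsum wage S"
  using wage_pos by (intro wsum_mono finite_if_subset_X) (auto intro: less_imp_le)

lemma key_eq_imp_eq: "x \<in> X \<Longrightarrow> y \<in> X \<Longrightarrow> key x = key y \<Longrightarrow> x = y"
  using inj_key by (rule inj_onD)

lemma obtain_key_max:
  assumes "Y \<subseteq> X" "Y \<noteq> {}"
  obtains m where "m \<in> Y" "\<And>y. y \<in> Y \<Longrightarrow> key y \<le> key m"
proof -
  have fin: "finite (key ` Y)" using finite_if_subset_X[OF assms(1)] by simp
  have "Max (key ` Y) \<in> key ` Y" using Max_in[OF fin] assms(2) by simp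
  then obtain m where "m \<in> Y" "key m = Max (key ` Y)" by force
  then show ?thesis using Max_ge[OF fin] that by simp
qed

lemma obtain_key_min:
  assumes "Y \<subseteq> X" "Y \<noteq> {}"
  obtains m where "m \<in> Y" "\<And>y. y \<in> Y \<Longrightarrow> key m \<le> key y"
  using ex_is_arg_min_if_finite[OF finite_if_subset_X[OF assms(1)] assms(2), of key]
  by (auto simp: is_arg_min_linorder)

lemma wage_upto_mono: "S \<subseteq> T \<Longrightarrow> T \<subseteq> X \<Longrightarrow> wage_upto S x \<le> wage_upto T x"
  unfolding wage_upto_def by (rule wsum_mono_X) auto

lemma wage_le_wage_upto: "S \<subseteq> X \<Longrightarrow> x \<in> S \<Longrightarrow> wage x \<le> wage_upto S x"
  using wsum_mono_X[of "{x}" "{y \<in> S. key y \<le> key x}"] by (auto simp: wage_upto_def wsum_def)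

lemma wage_upto_insert:
  assumes "finite S" "z \<notin> S"
  shows "wage_upto (insert z S) x = wage_upto S x + (if key z \<le> key x then wage z else 0)"
proof (cases "key z \<le> key x")
  case True
  then have "{y \<in> insert z S. key y \<le> key x} = insert z {y \<in> S. key y \<le> key x}" by auto
  then show ?thesis using True assms by (simp add: wage_upto_def wsum_insert)
next
  case False
  then have "{y \<in> insert z S. key y \<le> key x} = {y \<in> S. key y \<le> key x}" by auto
  then show ?thesis using False by (simp add: wage_upto_def)
qed

lemma wage_upto_eq_strict:
  assumes "S \<subseteq> X" "x \<in> S"
  shows "wage_upto S x = wage x + wsum wage {y \<in> S. key y < key x}"
proof -
  have "{y \<in> S. key y \<le> key x} = insert x {y \<in> S. key y < key x}"
    using assms key_eq_imp_eq by (auto simp: order.order_iff_strict)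
  then show ?thesis
    using finite_if_subset_X[OF assms(1)] by (simp add: wage_upto_def wsum_insert)
qed

lemma wage_upto_add_less:
  assumes "S \<subseteq> X" "y \<in> S" "key x < key y"
  shows "wage_upto S x + wage y \<le> wage_upto S y"
proof -
  have "wage_upto S x + wage y = wsum wage (insert y {z \<in> S. key z \<le> key x})"
    using assms(3) finite_if_subset_X[OF assms(1)] by (simp add: wage_upto_def wsum_insert not_le)
  also have "\<dots> \<le> wage_upto S y"
    unfolding wage_upto_def using assms by (intro wsum_mono_X) auto
  finally show ?thesis .
qed

lemma greedy_eq_affordable:
  assumes "sorted_wrt (\<lambda>x y. key x < key y) ys" "set ys \<subseteq> X" "finite Y0" "Y0 \<inter> set ys = {}"
  shows "greedy wage B ys Y0 = Y0 \<union> {x \<in> set ys. wsum wage Y0 + wage_upto (set ys) x < B}"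
  using assms
proof (induction ys arbitrary: Y0)
  case Nil
  then show ?case by simp
next
  case (Cons a ys)
  have a_least: "key a < key x" if "x \<in> set ys" for x
    using Cons.prems(1) that by simp
  have "a \<notin> set ys" using a_least by blast
  have upto_a: "wage_upto (set (a # ys)) a = wage a"
  proof -
    have "{y \<in> set (a # ys). key y \<le> key a} = {a}" using a_least by force
    then show ?thesis by (simp add: wage_upto_def wsum_def)
  qed
  have upto_ys: "wage_upto (set (a # ys)) x = wage a + wage_upto (set ys) x" if "x \<in> set ys" for x
    using wage_upto_insert[OF _ \<open>a \<notin> set ys\<close>] a_least[OF that] by (simp add: less_imp_le)
  have Y0_a: "wsum wage (Y0 \<union> {a}) = wage a + wsum wage Y0"
    using Cons.prems(3,4) by (simp add: wsum_insert)
  show ?case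
  proof (cases "wsum wage (Y0 \<union> {a}) < B")
    case True
    have "greedy wage B (a # ys) Y0 = greedy wage B ys (Y0 \<union> {a})"
      using True by simp
    also have "\<dots> = (Y0 \<union> {a}) \<union> {x \<in> set ys. wage a + wsum wage Y0 + wage_upto (set ys) x < B}"
      using Cons.IH[of "Y0 \<union> {a}"] Cons.prems \<open>a \<notin> set ys\<close> Y0_a by auto
    finally show ?thesis
      using True Y0_a upto_a upto_ys by (auto simp: algebra_simps)
  next
    case False
    have rejected: "\<not> wsum wage Y0 + wage_upto (set ys) x < B" if "x \<in> set ys" for x
      using False Y0_a wage_mono[OF a_least[OF that]] wage_le_wage_upto[of "set ys" x] Cons.prems(2) that
      by auto
    have "greedy wage B (a # ys) Y0 = greedy wage B ys Y0"
      using False by simp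
    also have "\<dots> = Y0"
      using Cons.IH[of Y0] Cons.prems rejected by auto
    finally show ?thesis
      using False Y0_a upto_a upto_ys rejected wage_pos[of a] Cons.prems(2) by fastforce
  qed
qed

lemma greedy_choice_subset: "greedy_choice Y \<subseteq> Y"
  by (auto simp: greedy_choice_def)

lemma greedy_choice_eq_insert_max:
  assumes "Y \<subseteq> X" "m \<in> Y" and max: "\<And>y. y \<in> Y \<Longrightarrow> key y \<le> key m"
  shows "greedy_choice Y = insert m (budget_prefix (Y - {m}))"
proof -
  have below_m: "key x < key m" if "x \<in> Y - {m}" for x
    using max[of x] key_eq_imp_eq[of x m] that assms(1,2) by force
  have upto_eq: "wage_upto Y x = wage_upto (Y - {m}) x" if "x \<in> Y - {m}" for x
  proof -
    have "\<not> key m \<le> key x" using below_m[OF that] by simp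
    then show ?thesis
      using wage_upto_insert[of "Y - {m}" m x] assms(2) finite_if_subset_X[OF assms(1)]
      by (simp add: insert_absorb)
  qed
  show ?thesis
  proof (rule set_eqI)
    fix x
    show "x \<in> greedy_choice Y \<longleftrightarrow> x \<in> insert m (budget_prefix (Y - {m}))"
    proof (cases "x \<in> Y - {m}")
      case True
      then have "\<not> (\<forall>y\<in>Y. key y \<le> key x)" using below_m assms(2) by fastforce
      then show ?thesis
        using True upto_eq[OF True] by (auto simp: greedy_choice_def budget_prefix_def)
    next
      case False
      then show ?thesis using assms by (auto simp: greedy_choice_def budget_prefix_def)
    qed
  qed
qed

lemma greedy_sorted_eq_greedy_choice:
  assumes "Y \<subseteq> X" "Y \<noteq> {}"
  defines "xs \<equiv> sorted_key_list_of_set key Y"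
  shows "greedy wage B (butlast xs) {} \<union> {last xs} = greedy_choice Y"
proof -
  have set_xs: "set xs = Y" and sorted_xs: "sorted_wrt (\<lambda>x y. key x < key y) xs"
    using set_strict_sorted_key_list_of_set[OF inj_key assms(1) finite_if_subset_X[OF assms(1)]]
    by (simp_all add: xs_def)
  obtain bl m where xs: "xs = bl @ [m]"
    using set_xs assms(2) by (metis rev_exhaust set_empty)
  then have sorted_bl: "sorted_wrt (\<lambda>x y. key x < key y) bl"
    and below_m: "\<And>x. x \<in> set bl \<Longrightarrow> key x < key m"
    using sorted_xs by (simp_all add: sorted_wrt_append)
  have m_in: "m \<in> Y" and set_bl: "set bl = Y - {m}"
    using set_xs xs below_m by auto
  have "set bl \<subseteq> X" using set_bl assms(1) by blast
  then have "greedy wage B bl {} = budget_prefix (Y - {m})"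
    using greedy_eq_affordable[OF sorted_bl, of "{}"] set_bl
    by (simp add: budget_prefix_def wsum_def)
  moreover have "key y \<le> key m" if "y \<in> Y" for y
    using that set_bl below_m by (cases "y = m") (auto intro: less_imp_le)
  ultimately show ?thesis
    using greedy_choice_eq_insert_max[OF assms(1) m_in] xs by simp
qed

lemma SUB_greedy_choice: "SUB X greedy_choice"
  unfolding SUB_def
proof (intro allI impI subsetI)
  fix Y' Y'' x assume Y: "Y'' \<subseteq> Y' \<and> Y' \<subseteq> X" and x: "x \<in> Y'' - greedy_choice Y''"
  then obtain y where "y \<in> Y''" "key x < key y" and "B \<le> wage_upto Y'' x"
    by (auto simp: greedy_choice_def not_le)
  moreover have "wage_upto Y'' x \<le> wage_upto Y' x"
    using Y by (intro wage_upto_mono) auto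
  ultimately show "x \<in> Y' - greedy_choice Y'"
    using x Y by (auto simp: greedy_choice_def not_le)
qed

lemma greedy_choice_exhausts_budget:
  assumes "Y \<subseteq> X" "greedy_choice Y \<noteq> Y"
  shows "B \<le> wsum wage (greedy_choice Y)"
proof -
  let ?R = "Y - greedy_choice Y"
  obtain z where z: "z \<in> ?R" and least: "\<And>x. x \<in> ?R \<Longrightarrow> key z \<le> key x"
    using obtain_key_min[of ?R] assms greedy_choice_subset by blast
  obtain m where m: "m \<in> Y" and max: "\<And>y. y \<in> Y \<Longrightarrow> key y \<le> key m"
    using obtain_key_max[OF assms(1)] z by blast
  have m_chosen: "m \<in> greedy_choice Y"
    using m max by (simp add: greedy_choice_def)
  have "B \<le> wage_upto Y z" and "key z < key m"
    using z max by (auto simp: greedy_choice_def not_le intro: less_le_trans)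
  define L where "L = {y \<in> Y. key y < key z}"
  have "m \<notin> L" "finite L"
    using \<open>key z < key m\<close> finite_if_subset_X[OF assms(1)] by (auto simp: L_def)
  have "B \<le> wage_upto Y z" by fact
  also have "\<dots> = wage z + wsum wage L"
    unfolding L_def using wage_upto_eq_strict assms(1) z by blast
  also have "\<dots> \<le> wage m + wsum wage L"
    using wage_mono[OF \<open>key z < key m\<close>] by simp
  also have "\<dots> = wsum wage (insert m L)"
    using \<open>m \<notin> L\<close> \<open>finite L\<close> by (simp add: wsum_insert)
  also have "\<dots> \<le> wsum wage (greedy_choice Y)"
  proof (rule wsum_mono_X)
    show "insert m L \<subseteq> greedy_choice Y"
      using m_chosen least by (force simp: L_def not_le)
    show "greedy_choice Y \<subseteq> X"
      using greedy_choice_subset assms(1) by blast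
  qed
  finally show ?thesis .
qed

lemma budget_prefix_insert_keep:
  assumes S: "S \<subseteq> X" and "z \<in> X" "z \<notin> S" "x \<in> budget_prefix S"
    and "key z < key x \<Longrightarrow> wage_upto S x + wage z < B"
  shows "x \<in> budget_prefix (insert z S)"
proof -
  have "key x \<noteq> key z" using assms key_eq_imp_eq by (auto simp: budget_prefix_def)
  then show ?thesis
    using assms wage_upto_insert[OF finite_if_subset_X[OF S] \<open>z \<notin> S\<close>, of x]
    by (cases "key z < key x") (auto simp: budget_prefix_def not_less)
qed

(* Of the contracts affordable in S only d can be lost: those ranked above d were already over
   budget, those below d stay under it, and z fits in d's place. *)
lemma budget_prefix_insert_exchange:
  assumes S: "S \<subseteq> X" and z: "z \<in> X" "z \<notin> S"
    and d: "d \<in> budget_prefix S" "key z < key d" "B \<le> wage_upto S d + wage z"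
  shows "insert z (budget_prefix S - {d}) \<subseteq> budget_prefix (insert z S)"
proof
  have "d \<in> S" "wage_upto S d < B" using d(1) by (auto simp: budget_prefix_def)
  have below_d: "wage_upto S x + wage z < B" if "key x < key d" for x
    using wage_upto_add_less[OF S \<open>d \<in> S\<close> that] wage_mono[OF \<open>key z < key d\<close>]
      \<open>wage_upto S d < B\<close> by linarith
  fix x assume "x \<in> insert z (budget_prefix S - {d})"
  then consider "x = z" | "x \<in> budget_prefix S" "x \<noteq> d" by blast
  then show "x \<in> budget_prefix (insert z S)"
  proof cases
    case 1
    then show ?thesis
      using below_d[OF \<open>key z < key d\<close>] wage_upto_insert[OF finite_if_subset_X[OF S] z(2)]
      by (simp add: budget_prefix_def)
  next
    case 2
    then have "x \<in> S" "wage_upto S x < B" by (auto simp: budget_prefix_def)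
    have "\<not> key d < key x"
    proof
      assume "key d < key x"
      then have "wage_upto S d + wage z \<le> wage_upto S x"
        using wage_upto_add_less[OF S \<open>x \<in> S\<close>] wage_mono[OF less_trans[OF \<open>key z < key d\<close>]]
        by (meson add_left_mono order_trans)
      with d(3) \<open>wage_upto S x < B\<close> show False by simp
    qed
    moreover have "key x \<noteq> key d"
      using 2 \<open>d \<in> S\<close> \<open>x \<in> S\<close> S key_eq_imp_eq by blast
    ultimately show ?thesis
      using budget_prefix_insert_keep[OF S z 2(1)] below_d by simp
  qed
qed

lemma card_budget_prefix_insert:
  assumes S: "S \<subseteq> X" and z: "z \<in> X" "z \<notin> S"
  shows "card (budget_prefix S) \<le> card (budget_prefix (insert z S))"
proof -
  have fin: "finite (budget_prefix (insert z S))" "finite (budget_prefix S)"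
    using assms finite_if_subset_X by (simp_all add: budget_prefix_def)
  show ?thesis
  proof (cases "\<exists>d \<in> budget_prefix S. key z < key d \<and> B \<le> wage_upto S d + wage z")
    case False
    then have "budget_prefix S \<subseteq> budget_prefix (insert z S)"
      using budget_prefix_insert_keep[OF S z] by (meson not_le subsetI)
    then show ?thesis by (rule card_mono[OF fin(1)])
  next
    case True
    then obtain d where d: "d \<in> budget_prefix S" "key z < key d" "B \<le> wage_upto S d + wage z"
      by blast
    have "z \<notin> budget_prefix S - {d}"
      using \<open>z \<notin> S\<close> by (auto simp: budget_prefix_def)
    then have "card (budget_prefix S) = card (insert z (budget_prefix S - {d}))"
      using d(1) fin(2) by (metis card_Suc_Diff1 card_insert_disjoint finite_Diff)
    also have "\<dots> \<le> card (budget_prefix (insert z S))"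
      by (rule card_mono[OF fin(1) budget_prefix_insert_exchange[OF S z d]])
    finally show ?thesis .
  qed
qed

lemma card_budget_prefix_mono:
  assumes "S \<subseteq> T" "T \<subseteq> X"
  shows "card (budget_prefix S) \<le> card (budget_prefix T)"
proof -
  have "finite (T - S)" using assms(2) finite_if_subset_X by blast
  have "card (budget_prefix S) \<le> card (budget_prefix (S \<union> D))" if "D \<subseteq> T - S" for D
    using finite_subset[OF that \<open>finite (T - S)\<close>] assms that
  proof (induction D rule: finite_induct)
    case empty
    then show ?case by simp
  next
    case (insert a D)
    then have "card (budget_prefix (S \<union> D)) \<le> card (budget_prefix (insert a (S \<union> D)))"
      by (intro card_budget_prefix_insert) auto
    with insert show ?case by simp
  qed
  from this[of "T - S"] show ?thesis
    using assms(1) by (simp add: Un_absorb1)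
qed

lemma remove_key_max_mono:
  assumes "Y'' \<subseteq> Y'" "Y' \<subseteq> X" "m'' \<in> Y''" "m' \<in> Y'"
    and "\<And>y. y \<in> Y'' \<Longrightarrow> key y \<le> key m''" "\<And>y. y \<in> Y' \<Longrightarrow> key y \<le> key m'"
  shows "Y'' - {m''} \<subseteq> Y' - {m'}"
proof
  fix y assume y: "y \<in> Y'' - {m''}"
  have "y \<noteq> m'"
  proof
    assume "y = m'"
    then have "key m'' = key m'"
      using y assms by (simp add: order.antisym subsetD)
    then show False
      using y \<open>y = m'\<close> assms key_eq_imp_eq by blast
  qed
  then show "y \<in> Y' - {m'}" using y assms(1) by blast
qed

lemma card_greedy_choice:
  assumes "Y \<subseteq> X" "m \<in> Y" "\<And>y. y \<in> Y \<Longrightarrow> key y \<le> key m"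
  shows "card (greedy_choice Y) = Suc (card (budget_prefix (Y - {m})))"
proof -
  have "finite (budget_prefix (Y - {m}))"
    using finite_if_subset_X[OF assms(1)] by (simp add: budget_prefix_def)
  then show ?thesis
    using greedy_choice_eq_insert_max[OF assms] by (simp add: budget_prefix_def)
qed

lemma LAD_greedy_choice: "LAD X greedy_choice"
  unfolding LAD_def
proof (intro allI impI)
  fix Y' Y'' assume Y: "Y'' \<subseteq> Y' \<and> Y' \<subseteq> X"
  show "card (greedy_choice Y'') \<le> card (greedy_choice Y')"
  proof (cases "Y'' = {}")
    case True
    then show ?thesis by (simp add: greedy_choice_def)
  next
    case False
    obtain m'' where m'': "m'' \<in> Y''" "\<And>y. y \<in> Y'' \<Longrightarrow> key y \<le> key m''"
      using obtain_key_max[OF _ False] Y by blast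
    obtain m' where m': "m' \<in> Y'" "\<And>y. y \<in> Y' \<Longrightarrow> key y \<le> key m'"
      using obtain_key_max[of Y'] Y m''(1) by blast
    have "card (budget_prefix (Y'' - {m''})) \<le> card (budget_prefix (Y' - {m'}))"
      using Y m'' m' by (intro card_budget_prefix_mono remove_key_max_mono) auto
    then show ?thesis
      using card_greedy_choice[of Y'' m''] card_greedy_choice[of Y' m'] Y m'' m' by auto
  qed
qed

end

lemma wage_ranking_wage_then_rank:
  assumes "finite X" "\<forall>x\<in>X. 0 < wage x" "inj_on r X"
  shows "wage_ranking X wage (\<lambda>x. (wage x, r x))"
  using assms by unfold_locales (auto simp: inj_on_def less_prod_def)

lemma Ch_eq_greedy_choice:
  assumes "wage_ranking X wage (\<lambda>x. (wage x, r x))" "Y \<subseteq> X"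
  shows "Ch wage B r Y = wage_ranking.greedy_choice wage B (\<lambda>x. (wage x, r x)) Y"
proof -
  interpret wage_ranking X wage B "\<lambda>x. (wage x, r x)" by fact
  show ?thesis
    using greedy_sorted_eq_greedy_choice[OF assms(2)]
    by (simp add: Ch_def sorted_contracts_def greedy_choice_def Let_def)
qed

theorem lemma5:
  fixes X :: "'a set" and wage :: "'a \<Rightarrow> real" and B :: real
    and r :: "'a \<Rightarrow> nat" and \<gamma> :: real and f :: "'a set \<Rightarrow> real"
  assumes "finite X"
    and "B > 0"
    and "\<forall>x\<in>X. 0 < wage x \<and> wage x \<le> B"
    and "inj_on r X"
    and "\<gamma> > 0"
    and "\<forall>Y. Y \<subseteq> X \<longrightarrow> f Y = \<gamma> * wsum wage Y"
  shows "SUB X (Ch wage B r) \<and> IRC X (Ch wage B r) \<and> LAD X (Ch wage B r)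
         \<and> COM X B wage f (Ch wage B r)"
proof -
  have ranking: "wage_ranking X wage (\<lambda>x. (wage x, r x))"
    using assms(1,3,4) by (intro wage_ranking_wage_then_rank) auto
  interpret wage_ranking X wage B "\<lambda>x. (wage x, r x)" by (fact ranking)
  note Ch_eq = Ch_eq_greedy_choice[OF ranking]
  have "IRC X greedy_choice"
    using finite_X greedy_choice_subset SUB_greedy_choice LAD_greedy_choice
    by (rule IRC_if_SUB_LAD)
  moreover have "COM X B wage f greedy_choice"
    using assms(3,5)
    by (intro COM_if_budget_exhausted[OF finite_X _ _ assms(6) greedy_choice_subset
          greedy_choice_exhausts_budget]) (auto intro: less_imp_le)
  ultimately show ?thesis
    using SUB_greedy_choice LAD_greedy_choice choice_properties_cong[OF Ch_eq] by simp
qed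

end
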